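(* Let $\Lambda_2,\Lambda_3,\Lambda_4\in\mathbb C$ with $\Lambda_4\ne0$, and let $\mathcal V^{[2]}$ be the Virasoro Whittaker module generated by $|J\rangle$ with $L_n|J\rangle=\Lambda_n|J\rangle$ ($n=2,3,4$), $L_n|J\rangle=0$ ($n>4$). There exists a unique formal series $|\Psi\rangle=\sum_{k\ge0}\Lambda_5^k|\Psi_k\rangle$, $|\Psi_0\rangle=|J\rangle$, $|\Psi_k\rangle\in\mathcal V^{[2]}$ independent of $\Lambda_5$, satisfying $L_n|\Psi\rangle=\Lambda_n|\Psi\rangle$ ($n=3,4,5$), $L_n|\Psi\rangle=0$ ($n>5$), and the orthogonal gauge $\xi(|\Psi_k\rangle)=\delta_{k,0}$. For every $k\in\mathbb N$ its component $|\Psi_k\rangle$ belongs to $V_k^{(1)}$. If in addition $\Lambda_3=0$, then $|\Psi_k\rangle\in V_k^{(2)}\subset V_k^{(1)}$.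
   Context: Basis $v_\lambda=\mathbf L_{-\lambda}|J\rangle$, $\mathbf L_{-\lambda}=L_{-\lambda_1+2}\cdots L_{-\lambda_\ell+2}$ for partitions $\lambda=(\lambda_1\ge\dots\ge\lambda_\ell\ge1)$, $v_\emptyset=|J\rangle$; $\xi$ is the linear functional giving the coefficient of $|J\rangle$ in this basis. $|\lambda|=\sum\lambda_i$, $U_m=\operatorname{span}\{v_\lambda:|\lambda|\le m\}$. For $\delta\in\{1,2\}$ and $\lambda=(\cdots3^{n_3}2^{n_2}1^{n_1})$, $\deg_\delta v_\lambda=n_1+\delta n_2+\sum_{k>2}n_k(k-2)$ (i.e. $\deg_\delta L_{-k}=k$ for $k>0$, $\deg_\delta L_0=\delta$, $\deg_\delta L_1=1$). $V_k^{(\delta)}=\operatorname{span}\{v_\lambda\in U_{3k}:\deg_\delta v_\lambda\le k\}$. The relations on $|\Psi\rangle$ hold order by order in $\Lambda_5$. *)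

theory Defs
  imports Main "HOL-Analysis.Analysis"
begin

definition is_partition :: "nat list \<Rightarrow> bool" where
  "is_partition lam \<longleftrightarrow> sorted_wrt (\<ge>) lam \<and> (\<forall>i\<in>set lam. 1 \<le> i)"

definition vir_word :: "(int \<Rightarrow> 'v \<Rightarrow> 'v) \<Rightarrow> 'v \<Rightarrow> nat list \<Rightarrow> 'v" where
  "vir_word L J lam = foldr (\<lambda>i w. L (2 - int i) w) lam J"

text \<open>deg_delta: a part 1 (operator L_1) has degree 1, a part 2 (operator L_0) degree delta,
  a part k > 2 (operator L_{-(k-2)}) degree k - 2.\<close>
definition deg_part :: "nat \<Rightarrow> nat \<Rightarrow> nat" where
  "deg_part \<delta> i = (if i = 1 then 1 else if i = 2 then \<delta> else i - 2)"

definition deg_delta :: "nat \<Rightarrow> nat list \<Rightarrow> nat" where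
  "deg_delta \<delta> lam = sum_list (map (deg_part \<delta>) lam)"

definition U_space :: "(complex \<Rightarrow> 'v::ab_group_add \<Rightarrow> 'v) \<Rightarrow> (int \<Rightarrow> 'v \<Rightarrow> 'v) \<Rightarrow> 'v \<Rightarrow> nat \<Rightarrow> 'v set" where
  "U_space smult_v L J m = module.span smult_v {vir_word L J lam | lam. is_partition lam \<and> sum_list lam \<le> m}"

definition V_space :: "(complex \<Rightarrow> 'v::ab_group_add \<Rightarrow> 'v) \<Rightarrow> (int \<Rightarrow> 'v \<Rightarrow> 'v) \<Rightarrow> 'v \<Rightarrow> nat \<Rightarrow> nat \<Rightarrow> 'v set" where
  "V_space smult_v L J \<delta> k = module.span smult_v
     {vir_word L J lam | lam. is_partition lam \<and> vir_word L J lam \<in> U_space smult_v L J (3 * k)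
                              \<and> deg_delta \<delta> lam \<le> k}"

definition xi :: "(complex \<Rightarrow> 'v::ab_group_add \<Rightarrow> 'v) \<Rightarrow> (int \<Rightarrow> 'v \<Rightarrow> 'v) \<Rightarrow> 'v \<Rightarrow> 'v \<Rightarrow> complex" where
  "xi smult_v L J x = module.representation smult_v (vir_word L J ` {lam. is_partition lam}) x J"

definition virasoro_rep :: "(complex \<Rightarrow> 'v::ab_group_add \<Rightarrow> 'v) \<Rightarrow> complex \<Rightarrow> (int \<Rightarrow> 'v \<Rightarrow> 'v) \<Rightarrow> bool" where
  "virasoro_rep smult_v c L \<longleftrightarrow>
     vector_space smult_v \<and> (\<forall>n. Vector_Spaces.linear smult_v smult_v (L n)) \<and>
     (\<forall>m n w. L m (L n w) - L n (L m w) =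
        smult_v (of_int (m - n)) (L (m + n) w)
        + (if m + n = 0 then smult_v (c / 12 * of_int (m ^ 3 - m)) w else 0))"

text \<open>The Virasoro Whittaker module V^[2] of central charge c generated by J with
  L_n J = Lambda_n J (n = 2,3,4), L_n J = 0 (n > 4): a Virasoro representation in which the
  PBW vectors v_lambda (lambda ranging over partitions) form a basis (distinct, linearly
  independent, spanning).  Any such module is canonically isomorphic to the universal
  (induced) Whittaker module.\<close>
definition whittaker_module2 ::
  "(complex \<Rightarrow> 'v::ab_group_add \<Rightarrow> 'v) \<Rightarrow> complex \<Rightarrow> (int \<Rightarrow> 'v \<Rightarrow> 'v) \<Rightarrow> 'v
     \<Rightarrow> complex \<Rightarrow> complex \<Rightarrow> complex \<Rightarrow> bool" where
  "whittaker_module2 smult_v c L J \<Lambda>2 \<Lambda>3 \<Lambda>4 \<longleftrightarrow>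
     virasoro_rep smult_v c L \<and>
     L 2 J = smult_v \<Lambda>2 J \<and> L 3 J = smult_v \<Lambda>3 J \<and> L 4 J = smult_v \<Lambda>4 J \<and>
     (\<forall>n>4. L n J = 0) \<and>
     inj_on (vir_word L J) {lam. is_partition lam} \<and>
     \<not> module.dependent smult_v (vir_word L J ` {lam. is_partition lam}) \<and>
     module.span smult_v (vir_word L J ` {lam. is_partition lam}) = UNIV"

text \<open>The relations on the formal series Psi = sum_k Lambda_5^k Psi_k, order by order in Lambda_5:
  Psi_0 = J; L_3 Psi = Lambda_3 Psi, L_4 Psi = Lambda_4 Psi, L_5 Psi = Lambda_5 Psi,
  L_n Psi = 0 (n > 5); gauge xi(Psi_k) = delta_{k,0}.\<close>
definition psi_conditions ::
  "(complex \<Rightarrow> 'v::ab_group_add \<Rightarrow> 'v) \<Rightarrow> (int \<Rightarrow> 'v \<Rightarrow> 'v) \<Rightarrow> 'v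
     \<Rightarrow> complex \<Rightarrow> complex \<Rightarrow> (nat \<Rightarrow> 'v) \<Rightarrow> bool" where
  "psi_conditions smult_v L J \<Lambda>3 \<Lambda>4 \<Psi> \<longleftrightarrow>
     \<Psi> 0 = J \<and>
     (\<forall>k. L 3 (\<Psi> k) = smult_v \<Lambda>3 (\<Psi> k)) \<and>
     (\<forall>k. L 4 (\<Psi> k) = smult_v \<Lambda>4 (\<Psi> k)) \<and>
     L 5 (\<Psi> 0) = 0 \<and> (\<forall>k. L 5 (\<Psi> (Suc k)) = \<Psi> k) \<and>
     (\<forall>n>5. \<forall>k. L n (\<Psi> k) = 0) \<and>
     (\<forall>k. xi smult_v L J (\<Psi> k) = (if k = 0 then 1 else 0))"

end

theory Submission
  imports Defs
begin

(* Put T_n = L_n - Lambda_n (with Lambda_n = 0 for n >= 5). Then T_n J = 0 for n >= 3, the T_n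
  satisfy the Witt relations [T_n, T_m] = (n - m) T_(n+m), and the conditions on Psi say
  T_n Psi_k = delta_(n,5) Psi_(k-1). Hence xi(T_w Psi_k) = [w = 5^k] for every word w of letters
  >= 3. Conversely these numbers determine a vector: the pairing <mu, x> = xi(T_(mu+2) x) is
  triangular on the PBW basis with respect to size, with diagonal entries built from the
  factors 2 m Lambda_4 of [L_(m+2), L_(2-m)] = 2 m L_4 + ..., nonzero since Lambda_4 <> 0.
  Existence: solve the triangular system <mu, Psi_k> = [mu = 3^k] and pass from nonincreasing
  words to all words by the Witt relations. Degree bounds: for a weight psi on parts that is
  subadditive along commutators, T_n lowers the psi-filtration by psi(n - 2), so <mu, v_nu> <> 0
  forces |mu| <= |nu| and deg mu <= deg nu; solving inside the span of the nu with |nu| <= 3k and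
  deg nu <= k therefore gives Psi_k in V_k. *)

section \<open>Partitions and words\<close>

fun insert_part :: "nat \<Rightarrow> nat list \<Rightarrow> nat list" where
  "insert_part p [] = [p]"
| "insert_part p (q # qs) = (if q \<le> p then p # q # qs else q # insert_part p qs)"

lemma set_insert_part [simp]: "set (insert_part p qs) = insert p (set qs)"
  by (induction qs) auto

lemma sum_list_insert_part [simp]: "sum_list (insert_part p qs) = p + sum_list qs"
  by (induction qs) auto

definition part_weight :: "(nat \<Rightarrow> int) \<Rightarrow> nat list \<Rightarrow> int" where
  "part_weight \<psi> \<rho> = sum_list (map \<psi> \<rho>)"

lemma part_weight_Nil [simp]: "part_weight \<psi> [] = 0"
  and part_weight_Cons [simp]: "part_weight \<psi> (p # \<rho>) = \<psi> p + part_weight \<psi> \<rho>"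
  by (simp_all add: part_weight_def)

lemma part_weight_insert_part [simp]: "part_weight \<psi> (insert_part p \<rho>) = \<psi> p + part_weight \<psi> \<rho>"
  by (induction \<rho>) auto

lemma part_weight_int [simp]: "part_weight int \<rho> = int (sum_list \<rho>)"
  by (induction \<rho>) auto

lemma part_weight_deg_part [simp]:
  "part_weight (\<lambda>p. int (deg_part \<delta> p)) \<rho> = int (deg_delta \<delta> \<rho>)"
  by (induction \<rho>) (auto simp: deg_delta_def)

lemma is_partition_Nil [simp]: "is_partition []"
  by (simp add: is_partition_def)

lemma is_partition_Cons:
  "is_partition (q # qs) \<longleftrightarrow> 1 \<le> q \<and> (\<forall>x\<in>set qs. x \<le> q) \<and> is_partition qs"
  by (auto simp: is_partition_def)

lemma is_partition_insert_part: "is_partition qs \<Longrightarrow> 1 \<le> p \<Longrightarrow> is_partition (insert_part p qs)"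
  by (induction qs) (auto simp: is_partition_Cons)

lemma is_partition_remove1: "is_partition qs \<Longrightarrow> is_partition (remove1 m qs)"
  by (induction qs) (auto simp: is_partition_Cons dest: subsetD[OF set_remove1_subset])

lemma is_partition_replicate: "1 \<le> p \<Longrightarrow> is_partition (replicate k p)"
  by (induction k) (auto simp: is_partition_Cons)

lemma Cons_remove1_partition:
  assumes "is_partition (p # qs)" "p \<in> set qs"
  shows "p # remove1 p qs = qs"
proof (cases qs)
  case (Cons q qs')
  then have "q = p" using assms by (fastforce simp: is_partition_Cons)
  then show ?thesis using Cons by simp
qed (use assms in simp)

lemma partition_eq_iff_mset:
  assumes "is_partition a" "is_partition b"
  shows "mset a = mset b \<longleftrightarrow> a = b"
proof
  assume "mset a = mset b"
  moreover have "sorted (rev a)" "sorted (rev b)"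
    using assms by (auto simp: is_partition_def sorted_wrt_rev)
  ultimately have "rev a = rev b"
    by (metis mset_rev properties_for_sort)
  then show "a = b" by simp
qed simp

lemma partition_sum_eq_0: "is_partition qs \<Longrightarrow> sum_list qs = 0 \<longleftrightarrow> qs = []"
  by (cases qs) (auto simp: is_partition_Cons)

lemma finite_partitions_sum_le: "finite {\<rho>. is_partition \<rho> \<and> sum_list \<rho> \<le> n}"
proof (rule finite_subset[OF _ finite_lists_length_le[of "{0..n}" n]])
  have "length \<rho> \<le> sum_list \<rho>" if "is_partition \<rho>" for \<rho>
    using that by (induction \<rho>) (auto simp: is_partition_Cons)
  then show "{\<rho>. is_partition \<rho> \<and> sum_list \<rho> \<le> n} \<subseteq> {xs. set xs \<subseteq> {0..n} \<and> length xs \<le> n}"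
    using member_le_sum_list by fastforce
qed simp

definition ann_word :: "nat list \<Rightarrow> int list" where
  "ann_word \<mu> = map (\<lambda>m. int m + 2) \<mu>"

lemma ann_word_Nil [simp]: "ann_word [] = []"
  and ann_word_Cons [simp]: "ann_word (m # \<mu>) = (int m + 2) # ann_word \<mu>"
  by (simp_all add: ann_word_def)

lemma ann_word_in_lists: "ann_word \<mu> \<in> lists {3..} \<longleftrightarrow> (\<forall>m\<in>set \<mu>. 1 \<le> m)"
  by (induction \<mu>) auto

lemma ann_word_eq_iff: "ann_word \<mu> = ann_word \<nu> \<longleftrightarrow> \<mu> = \<nu>"
  by (simp add: ann_word_def inj_map_eq_map inj_def)

lemma ann_word_replicate: "ann_word (replicate k 3) = replicate k 5"
  by (simp add: ann_word_def)

lemma sorted_word_eq_ann_word: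
  assumes "w \<in> lists {3..}" "sorted_wrt (\<ge>) w"
  obtains \<mu> where "is_partition \<mu>" "ann_word \<mu> = w"
proof
  let ?\<mu> = "map (\<lambda>n. nat (n - 2)) w"
  show "ann_word ?\<mu> = w" using assms(1) by (induction w) auto
  show "is_partition ?\<mu>"
    using assms by (auto simp: is_partition_def sorted_wrt_map elim!: sorted_wrt_mono_rel[rotated])
qed

primrec diag_coeff :: "complex \<Rightarrow> nat list \<Rightarrow> complex" where
  "diag_coeff l [] = 1"
| "diag_coeff l (m # \<mu>) = of_nat (2 * m) * l * of_nat (count_list (m # \<mu>) m) * diag_coeff l \<mu>"

lemma diag_coeff_nonzero: "l \<noteq> 0 \<Longrightarrow> is_partition \<mu> \<Longrightarrow> diag_coeff l \<mu> \<noteq> 0"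
proof (induction \<mu>)
  case (Cons m \<mu>)
  have "of_nat (count_list (m # \<mu>) m) \<noteq> (0 :: complex)" by (simp del: of_nat_Suc)
  then show ?case using Cons by (auto simp: is_partition_Cons simp del: count_list.simps)
qed simp

text \<open>\<open>position_weight w = (\<Sum>i. i * w!i)\<close>; it drops when an ascent \<open>m < n\<close> of a word of
  nonnegative letters is swapped or merged into the single letter \<open>m + n\<close>.\<close>
fun position_weight :: "int list \<Rightarrow> int" where
  "position_weight [] = 0"
| "position_weight (x # w) = position_weight w + sum_list w"

lemma position_weight_append:
  "position_weight (u @ z) = position_weight u + position_weight z + int (length u) * sum_list z"
  by (induction u) (auto simp: algebra_simps)

lemma position_weight_nonneg: "w \<in> lists {0..} \<Longrightarrow> 0 \<le> position_weight w"
  by (induction w) (auto intro!: add_nonneg_nonneg sum_list_nonneg)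

lemma ascent_if_not_sorted:
  "\<not> sorted_wrt (\<ge>) (w :: int list) \<Longrightarrow> \<exists>u m n z. w = u @ m # n # z \<and> m < n"
proof (induction w)
  case (Cons x w)
  show ?case
  proof (cases "sorted_wrt (\<ge>) w")
    case False
    then obtain u m n z where "w = u @ m # n # z" "m < n" using Cons.IH by blast
    then show ?thesis by (intro exI[of _ "x # u"]) auto
  next
    case True
    then obtain y w' where "w = y # w'" "x < y" using Cons.prems by (cases w) auto
    then show ?thesis by (intro exI[of _ "[]"]) auto
  qed
qed simp

lemma Witt_relation_vanishing:
  fixes h :: "int list \<Rightarrow> 'a::ring_1"
  assumes A: "A \<subseteq> {0..}" "\<And>m n. m \<in> A \<Longrightarrow> n \<in> A \<Longrightarrow> m + n \<in> A"
    and rel: "\<And>u m n z. u @ m # n # z \<in> lists A \<Longrightarrow>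
                h (u @ m # n # z) - h (u @ n # m # z) = of_int (n - m) * h (u @ (n + m) # z)"
    and sorted: "\<And>w. w \<in> lists A \<Longrightarrow> sorted_wrt (\<ge>) w \<Longrightarrow> h w = 0"
    and w: "w \<in> lists A"
  shows "h w = 0"
  using w
proof (induction "nat (position_weight w)" arbitrary: w rule: less_induct)
  case less
  show ?case
  proof (cases "sorted_wrt (\<ge>) w")
    case False
    then obtain u m n z where w: "w = u @ m # n # z" and "m < n"
      using ascent_if_not_sorted by blast
    have "0 \<le> m" "0 \<le> sum_list z" using less.prems w A(1) by (auto intro!: sum_list_nonneg)
    then have "position_weight (u @ n # m # z) < position_weight w"
      "position_weight (u @ (n + m) # z) < position_weight w"
      using \<open>m < n\<close> by (simp_all add: w position_weight_append algebra_simps)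
    moreover have "u @ n # m # z \<in> lists A" "u @ (n + m) # z \<in> lists A"
      using less.prems w A(2) by auto
    moreover have "lists A \<subseteq> lists {0..}" using A(1) by blast
    ultimately have "h (u @ n # m # z) = 0" "h (u @ (n + m) # z) = 0"
      using less.hyps position_weight_nonneg by (meson nat_less_eq_zless subsetD)+
    then show ?thesis using rel[of u m n z] less.prems w by simp
  qed (use sorted less.prems in blast)
qed

definition Psi_target :: "nat \<Rightarrow> int list \<Rightarrow> complex" where
  "Psi_target k w = (if w = replicate k 5 then 1 else 0)"

lemma Psi_target_Cons:
  "Psi_target k (n # w) = (if n = 5 then (case k of 0 \<Rightarrow> 0 | Suc k' \<Rightarrow> Psi_target k' w) else 0)"
  by (cases k) (auto simp: Psi_target_def)

lemma Psi_target_Witt_relation: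
  assumes "u @ m # n # z \<in> lists {3..}"
  shows "Psi_target k (u @ m # n # z) - Psi_target k (u @ n # m # z)
           = of_int (n - m) * Psi_target k (u @ (n + m) # z)"
proof -
  have letter: "x = 5" if "u' @ x # z' = replicate k 5" for u' x z'
  proof -
    have "x \<in> set (replicate k 5)" unfolding that[symmetric] by simp
    then show ?thesis by simp
  qed
  have "u @ (n + m) # z \<noteq> replicate k 5"
    using assms letter[of u "n + m" z] by auto
  moreover have "x = y" if "u @ x # y # z = replicate k 5" for x y
    using that letter[of u x "y # z"] letter[of "u @ [x]" y z] by simp
  ultimately show ?thesis
    by (cases "m = n") (auto simp: Psi_target_def)
qed

text \<open>With \<open>\<psi> p\<close> the degree of \<open>L\<^sub>2\<^sub>-\<^sub>p\<close> (\<open>p \<ge> 1\<close>) and \<open>\<phi> n\<close> that of \<open>L\<^sub>n\<close> (\<open>n \<ge> 2\<close>),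
  this says that every term of the commutator of \<open>L\<^sub>2\<^sub>-\<^sub>p\<close> with an operator of degree \<open>f\<close>
  that commutes like \<open>L\<^sub>x\<close> has degree at most \<open>f + \<psi> p\<close>.\<close>
definition bracket_bounded :: "(nat \<Rightarrow> int) \<Rightarrow> (int \<Rightarrow> int) \<Rightarrow> int \<Rightarrow> int \<Rightarrow> bool" where
  "bracket_bounded \<psi> \<phi> x f \<longleftrightarrow> (\<forall>p\<ge>1.
     (x + 2 - int p \<ge> 2 \<longrightarrow> \<phi> (x + 2 - int p) \<le> f + \<psi> p) \<and>
     (x + 2 - int p \<le> 1 \<longrightarrow> \<psi> (nat (int p - x)) \<le> f + \<psi> p) \<and>
     (x + 2 - int p = 0 \<longrightarrow> 0 \<le> f + \<psi> p))"

section \<open>Filtrations of the Whittaker module\<close>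

locale whittaker2 =
  fixes sm :: "complex \<Rightarrow> 'v::ab_group_add \<Rightarrow> 'v"
    and c :: complex and L :: "int \<Rightarrow> 'v \<Rightarrow> 'v" and J :: 'v
    and \<Lambda>2 \<Lambda>3 \<Lambda>4 :: complex
  assumes whittaker: "whittaker_module2 sm c L J \<Lambda>2 \<Lambda>3 \<Lambda>4"
begin

sublocale vector_space sm
  using whittaker by (simp add: whittaker_module2_def virasoro_rep_def)

lemma L_hom: "module_hom sm sm (L n)"
  using whittaker by (simp add: whittaker_module2_def virasoro_rep_def module_hom_iff_linear)

lemma L_commutator:
  "L m (L n w) - L n (L m w) = sm (of_int (m - n)) (L (m + n) w)
     + (if m + n = 0 then sm (c / 12 * of_int (m ^ 3 - m)) w else 0)"
  using whittaker by (simp add: whittaker_module2_def virasoro_rep_def)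

lemma L_J: "L 2 J = sm \<Lambda>2 J" "L 3 J = sm \<Lambda>3 J" "L 4 J = sm \<Lambda>4 J" "4 < n \<Longrightarrow> L n J = 0"
  using whittaker by (simp_all add: whittaker_module2_def)

definition vir_bracket :: "int \<Rightarrow> int \<Rightarrow> 'v \<Rightarrow> 'v" where
  "vir_bracket x a y = sm (of_int (x - a)) (L (x + a) y)
     + (if x + a = 0 then sm (c / 12 * of_int (x ^ 3 - x)) y else 0)"

lemma L_commutator_L: "L x (L a y) = L a (L x y) + vir_bracket x a y"
  using L_commutator[of x a y] by (simp add: vir_bracket_def algebra_simps)

abbreviation v :: "nat list \<Rightarrow> 'v" where
  "v \<equiv> vir_word L J"

lemma vir_word_Nil [simp]: "v [] = J"
  and vir_word_Cons [simp]: "v (p # \<rho>) = L (2 - int p) (v \<rho>)"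
  by (simp_all add: vir_word_def)

lemma inj_on_v: "inj_on v (Collect is_partition)"
  and independent_v: "independent (v ` Collect is_partition)"
  and span_v: "span (v ` Collect is_partition) = UNIV"
  using whittaker by (simp_all add: whittaker_module2_def)

definition vspan :: "(nat list \<Rightarrow> bool) \<Rightarrow> 'v set" where
  "vspan P = span (v ` {\<rho>. is_partition \<rho> \<and> P \<rho>})"

lemma v_in_vspan: "is_partition \<rho> \<Longrightarrow> P \<rho> \<Longrightarrow> v \<rho> \<in> vspan P"
  unfolding vspan_def by (rule span_base) auto

lemma vspan_mono: "(\<And>\<rho>. is_partition \<rho> \<Longrightarrow> P \<rho> \<Longrightarrow> Q \<rho>) \<Longrightarrow> vspan P \<subseteq> vspan Q"
  unfolding vspan_def by (rule span_mono) auto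

lemma vspan_zero [simp]: "0 \<in> vspan P"
  and vspan_add: "x \<in> vspan P \<Longrightarrow> y \<in> vspan P \<Longrightarrow> x + y \<in> vspan P"
  and vspan_scale: "x \<in> vspan P \<Longrightarrow> sm a x \<in> vspan P"
  by (simp_all add: vspan_def span_zero span_add span_scale)

lemma vspan_hom_image:
  assumes f: "module_hom sm sm f" and x: "x \<in> vspan P"
    and gen: "\<And>\<rho>. is_partition \<rho> \<Longrightarrow> P \<rho> \<Longrightarrow> f (v \<rho>) \<in> vspan Q"
  shows "f x \<in> vspan Q"
proof -
  have "f x \<in> span (f ` v ` {\<rho>. is_partition \<rho> \<and> P \<rho>})"
    using x module_hom.span_image[OF f] unfolding vspan_def by blast
  also have "\<dots> \<subseteq> vspan Q"
  proof -
    have "f ` v ` {\<rho>. is_partition \<rho> \<and> P \<rho>} \<subseteq> vspan Q" using gen by auto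
    then show ?thesis unfolding vspan_def by (rule span_minimal) simp
  qed
  finally show ?thesis .
qed

abbreviation filtration :: "(nat \<Rightarrow> int) \<Rightarrow> int \<Rightarrow> 'v set" where
  "filtration \<psi> q \<equiv> vspan (\<lambda>\<rho>. part_weight \<psi> \<rho> \<le> q)"

lemma filtration_mono: "q \<le> q' \<Longrightarrow> x \<in> filtration \<psi> q \<Longrightarrow> x \<in> filtration \<psi> q'"
  using vspan_mono[of "\<lambda>\<rho>. part_weight \<psi> \<rho> \<le> q" "\<lambda>\<rho>. part_weight \<psi> \<rho> \<le> q'"] by auto

lemma L_creation_commute:
  assumes "1 \<le> p" "p < q"
  shows "L (2 - int p) (L (2 - int q) y) = L (2 - int q) (L (2 - int p) y)
           + sm (of_int (int q - int p)) (L (2 - int (p + q - 2)) y)"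
proof -
  have "2 - int p + (2 - int q) = 2 - int (p + q - 2)" using assms by auto
  moreover have "(2 - int p) ^ 3 - (2 - int p) = 0" if "2 - int p + (2 - int q) = 0"
  proof -
    have "p = 1" using that assms by linarith
    then show ?thesis by simp
  qed
  ultimately show ?thesis
    using L_commutator[of "2 - int p" "2 - int q" y] by (simp add: algebra_simps)
qed

text \<open>Normal ordering, by induction on \<open>p + |\<mu>|\<close>: moving \<open>L\<^sub>2\<^sub>-\<^sub>p\<close> past \<open>L\<^sub>2\<^sub>-\<^sub>q\<close> (\<open>q > p\<close>)
  costs \<open>(q - p) L\<^sub>4\<^sub>-\<^sub>p\<^sub>-\<^sub>q\<close>, which lowers the size by 2.\<close>
lemma L_creation_remainder:
  assumes subadd: "\<And>p q. 1 \<le> p \<Longrightarrow> p < q \<Longrightarrow> \<psi> (p + q - 2) \<le> \<psi> p + \<psi> q"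
  shows "1 \<le> p \<Longrightarrow> is_partition \<mu> \<Longrightarrow> L (2 - int p) (v \<mu>) - v (insert_part p \<mu>)
    \<in> vspan (\<lambda>\<rho>. sum_list \<rho> + 2 \<le> sum_list \<mu> + p \<and> part_weight \<psi> \<rho> \<le> part_weight \<psi> \<mu> + \<psi> p)"
proof (induction "p + sum_list \<mu>" arbitrary: p \<mu> rule: less_induct)
  case less
  let ?F = "vspan (\<lambda>\<rho>. sum_list \<rho> + 2 \<le> sum_list \<mu> + p \<and> part_weight \<psi> \<rho> \<le> part_weight \<psi> \<mu> + \<psi> p)"
  show ?case
  proof (cases \<mu>)
    case (Cons q \<mu>')
    have q: "1 \<le> q" "is_partition \<mu>'" using less.prems Cons by (auto simp: is_partition_Cons)
    show ?thesis
    proof (cases "q \<le> p")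
      case False
      have creation_in_F: "L (2 - int r) (v \<rho>) \<in> ?F"
        if "1 \<le> r" "is_partition \<rho>" "r + sum_list \<rho> + 2 \<le> sum_list \<mu> + p"
          "\<psi> r + part_weight \<psi> \<rho> \<le> part_weight \<psi> \<mu> + \<psi> p" for r \<rho>
      proof -
        have "L (2 - int r) (v \<rho>) - v (insert_part r \<rho>) \<in> ?F"
          using less.hyps[of r \<rho>] that by (auto elim!: subsetD[OF vspan_mono, rotated])
        moreover have "v (insert_part r \<rho>) \<in> ?F"
          using that by (intro v_in_vspan is_partition_insert_part) auto
        ultimately show ?thesis using vspan_add by fastforce
      qed
      have "L (2 - int p) (v \<mu>') - v (insert_part p \<mu>') \<in> vspan (\<lambda>\<rho>.
          sum_list \<rho> + 2 \<le> sum_list \<mu>' + p \<and> part_weight \<psi> \<rho> \<le> part_weight \<psi> \<mu>' + \<psi> p)"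
        using less.hyps[of p \<mu>'] less.prems q Cons by simp
      then have "L (2 - int q) (L (2 - int p) (v \<mu>') - v (insert_part p \<mu>')) \<in> ?F"
        by (rule vspan_hom_image[OF L_hom]) (intro creation_in_F, use q Cons in auto)
      moreover have "L (2 - int (p + q - 2)) (v \<mu>') \<in> ?F"
        by (rule creation_in_F) (use q Cons False less.prems subadd[of p q] in auto)
      moreover have "L (2 - int p) (v \<mu>) - v (insert_part p \<mu>)
          = L (2 - int q) (L (2 - int p) (v \<mu>') - v (insert_part p \<mu>'))
            + sm (of_int (int q - int p)) (L (2 - int (p + q - 2)) (v \<mu>'))"
        using Cons False L_creation_commute[of p q "v \<mu>'"] less.prems
        by (simp add: module_hom.diff[OF L_hom])
      ultimately show ?thesis by (simp add: vspan_add vspan_scale)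
    qed (use Cons in simp)
  qed simp
qed

lemma L_creation_filtration:
  assumes subadd: "\<And>p q. 1 \<le> p \<Longrightarrow> p < q \<Longrightarrow> \<psi> (p + q - 2) \<le> \<psi> p + \<psi> q"
    and "1 \<le> p" "x \<in> filtration \<psi> q"
  shows "L (2 - int p) x \<in> filtration \<psi> (q + \<psi> p)"
  using L_hom assms(3)
proof (rule vspan_hom_image)
  fix \<rho> assume \<rho>: "is_partition \<rho>" "part_weight \<psi> \<rho> \<le> q"
  have "L (2 - int p) (v \<rho>) - v (insert_part p \<rho>) \<in> filtration \<psi> (q + \<psi> p)"
    using L_creation_remainder[OF subadd \<open>1 \<le> p\<close> \<rho>(1)] \<rho>(2)
    by (auto elim!: subsetD[OF vspan_mono, rotated])
  moreover have "v (insert_part p \<rho>) \<in> filtration \<psi> (q + \<psi> p)"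
    using \<rho> \<open>1 \<le> p\<close> by (intro v_in_vspan is_partition_insert_part) auto
  ultimately show "L (2 - int p) (v \<rho>) \<in> filtration \<psi> (q + \<psi> p)"
    using vspan_add by fastforce
qed

definition Lambda_at :: "int \<Rightarrow> complex" where
  "Lambda_at n = (if n = 3 then \<Lambda>3 else if n = 4 then \<Lambda>4 else 0)"

text \<open>In terms of \<open>T\<close> the conditions on \<open>\<Psi>\<close> read \<open>T\<^sub>n \<Psi>\<^sub>k = \<delta>\<^sub>n\<^sub>,\<^sub>5 \<Psi>\<^sub>k\<^sub>-\<^sub>1\<close> (\<open>n \<ge> 3\<close>).\<close>
definition T :: "int \<Rightarrow> 'v \<Rightarrow> 'v" where
  "T n x = L n x - sm (Lambda_at n) x"

lemma T_hom: "module_hom sm sm (T n)"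
  using L_hom unfolding module_hom_iff T_def
  by (simp add: scale_right_distrib scale_right_diff_distrib scale_left_commute)

lemma T_J: "3 \<le> n \<Longrightarrow> T n J = 0"
  by (auto simp: T_def Lambda_at_def L_J)

lemma T_eq_L: "5 \<le> n \<Longrightarrow> T n x = L n x"
  by (simp add: T_def Lambda_at_def)

lemma L_eq_T: "L n x = sm (Lambda_at n) x + T n x"
  by (simp add: T_def)

lemma T_commutator_L: "T x (L a y) = L a (T x y) + vir_bracket x a y"
  using L_commutator_L[of x a y]
  by (simp add: T_def module_hom.diff[OF L_hom] module_hom.scale[OF L_hom] algebra_simps)

lemma T_commutator:
  assumes "3 \<le> n" "3 \<le> m"
  shows "T n (T m y) - T m (T n y) = sm (of_int (n - m)) (T (n + m) y)"
proof -
  have "T n (T m y) - T m (T n y) = L n (L m y) - L m (L n y)"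
    by (simp add: T_def module_hom.diff[OF L_hom] module_hom.scale[OF L_hom] algebra_simps
        scale_left_commute)
  then show ?thesis using L_commutator[of n m y] T_eq_L[of "n + m" y] assms by simp
qed

lemma commuting_operator_filtration:
  assumes subadd: "\<And>p q. 1 \<le> p \<Longrightarrow> p < q \<Longrightarrow> \<psi> (p + q - 2) \<le> \<psi> p + \<psi> q"
    and bounded: "bracket_bounded \<psi> \<phi> x f" and p: "1 \<le> p" and \<kappa>: "is_partition \<kappa>"
    and L_IH: "\<And>b. 2 \<le> b \<Longrightarrow> L b (v \<kappa>) \<in> filtration \<psi> (part_weight \<psi> \<kappa> + \<phi> b)"
    and X_IH: "X (v \<kappa>) \<in> filtration \<psi> (part_weight \<psi> \<kappa> + f)"
    and X_comm: "\<And>a y. X (L a y) = L a (X y) + vir_bracket x a y"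
  shows "X (v (p # \<kappa>)) \<in> filtration \<psi> (part_weight \<psi> (p # \<kappa>) + f)"
proof -
  let ?F = "filtration \<psi> (part_weight \<psi> (p # \<kappa>) + f)"
  have "L (2 - int p) (X (v \<kappa>)) \<in> ?F"
    using L_creation_filtration[OF subadd p X_IH] by (simp add: add_ac)
  moreover have "L (x + (2 - int p)) (v \<kappa>) \<in> ?F"
  proof (cases "x + 2 - int p \<ge> 2")
    case True
    then show ?thesis
      using L_IH[of "x + (2 - int p)"] bounded p
      by (auto simp: bracket_bounded_def add_diff_eq elim!: filtration_mono[rotated])
  next
    case False
    define p' where "p' = nat (int p - x)"
    have "1 \<le> p'" and eq: "x + (2 - int p) = 2 - int p'" using False by (auto simp: p'_def)
    have "L (2 - int p') (v \<kappa>) \<in> filtration \<psi> (part_weight \<psi> \<kappa> + \<psi> p')"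
      by (rule L_creation_filtration[OF subadd \<open>1 \<le> p'\<close>]) (use \<kappa> in \<open>auto intro: v_in_vspan\<close>)
    moreover have "\<psi> p' \<le> f + \<psi> p" using bounded p False by (auto simp: bracket_bounded_def p'_def)
    ultimately show ?thesis unfolding eq by (auto elim!: filtration_mono[rotated])
  qed
  moreover have "v \<kappa> \<in> ?F" if "x + (2 - int p) = 0"
    using that bounded p \<kappa> by (auto simp: bracket_bounded_def intro!: v_in_vspan)
  ultimately show ?thesis
    unfolding vir_word_Cons X_comm vir_bracket_def by (auto intro!: vspan_add vspan_scale)
qed

lemma annihilator_filtration:
  assumes subadd: "\<And>p q. 1 \<le> p \<Longrightarrow> p < q \<Longrightarrow> \<psi> (p + q - 2) \<le> \<psi> p + \<psi> q"
    and T_bounded: "\<And>x. 3 \<le> x \<Longrightarrow> bracket_bounded \<psi> \<phi> x (- \<psi> (nat (x - 2)))"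
    and L_bounded: "\<And>x. 2 \<le> x \<Longrightarrow> bracket_bounded \<psi> \<phi> x (\<phi> x)"
    and L_J_degree: "\<And>n. 2 \<le> n \<Longrightarrow> n \<le> 4 \<Longrightarrow> L n J \<noteq> 0 \<Longrightarrow> 0 \<le> \<phi> n"
  shows "is_partition \<kappa> \<Longrightarrow>
    (\<forall>x\<ge>3. T x (v \<kappa>) \<in> filtration \<psi> (part_weight \<psi> \<kappa> - \<psi> (nat (x - 2)))) \<and>
    (\<forall>x\<ge>2. L x (v \<kappa>) \<in> filtration \<psi> (part_weight \<psi> \<kappa> + \<phi> x))"
proof (induction \<kappa>)
  case Nil
  have "L x J \<in> filtration \<psi> (\<phi> x)" if "2 \<le> x" for x
  proof (cases "L x J = 0")
    case False
    then have "x \<le> 4" using L_J(4) by force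
    with that False have "0 \<le> \<phi> x" using L_J_degree by blast
    have "x = 2 \<or> x = 3 \<or> x = 4" using \<open>2 \<le> x\<close> \<open>x \<le> 4\<close> by linarith
    then have "\<exists>a. L x J = sm a J" using L_J(1-3) by blast
    then show ?thesis
      using \<open>0 \<le> \<phi> x\<close> by (auto intro!: vspan_scale v_in_vspan[of "[]", simplified])
  qed simp
  then show ?case by (simp add: T_J)
next
  case (Cons p \<kappa>)
  then have \<kappa>: "is_partition \<kappa>" and p: "1 \<le> p" by (auto simp: is_partition_Cons)
  note IH = Cons.IH[OF \<kappa>]
  have L_IH: "\<And>b. 2 \<le> b \<Longrightarrow> L b (v \<kappa>) \<in> filtration \<psi> (part_weight \<psi> \<kappa> + \<phi> b)"
    using IH by blast
  have "T x (v (p # \<kappa>)) \<in> filtration \<psi> (part_weight \<psi> (p # \<kappa>) + - \<psi> (nat (x - 2)))"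
    if "3 \<le> x" for x
  proof -
    have "T x (v \<kappa>) \<in> filtration \<psi> (part_weight \<psi> \<kappa> + - \<psi> (nat (x - 2)))"
      using IH that by simp
    from commuting_operator_filtration[OF subadd T_bounded[OF that] p \<kappa> L_IH this T_commutator_L]
    show ?thesis .
  qed
  moreover have "L x (v (p # \<kappa>)) \<in> filtration \<psi> (part_weight \<psi> (p # \<kappa>) + \<phi> x)"
    if "2 \<le> x" for x
    by (rule commuting_operator_filtration
        [OF subadd L_bounded[OF that] p \<kappa> L_IH L_IH[OF that] L_commutator_L])
  ultimately show ?case by simp
qed

definition T_word :: "int list \<Rightarrow> 'v \<Rightarrow> 'v" where
  "T_word w = fold T w"

lemma T_word_Nil [simp]: "T_word [] x = x"
  and T_word_Cons [simp]: "T_word (n # w) x = T_word w (T n x)"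
  and T_word_append: "T_word (u @ w) x = T_word w (T_word u x)"
  by (simp_all add: T_word_def)

lemma T_word_hom: "module_hom sm sm (T_word w)"
proof (induction w)
  case Nil
  then show ?case by (simp add: T_word_def module_hom_iff_linear linear_ident)
next
  case (Cons n w)
  have "T_word (n # w) = T_word w \<circ> T n" by (simp add: fun_eq_iff)
  with module_hom_compose[OF T_hom Cons.IH] show ?case by (simp only:)
qed

lemma T_word_filtration:
  assumes T_bound: "\<And>\<kappa> n. is_partition \<kappa> \<Longrightarrow> 3 \<le> n \<Longrightarrow>
      T n (v \<kappa>) \<in> filtration \<psi> (part_weight \<psi> \<kappa> - \<psi> (nat (n - 2)))"
  shows "w \<in> lists {3..} \<Longrightarrow> x \<in> filtration \<psi> q \<Longrightarrow>
    T_word w x \<in> filtration \<psi> (q - sum_list (map (\<lambda>n. \<psi> (nat (n - 2))) w))"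
proof (induction w arbitrary: q x)
  case (Cons n w)
  have "T n x \<in> filtration \<psi> (q - \<psi> (nat (n - 2)))"
    using T_hom Cons.prems(2)
  proof (rule vspan_hom_image)
    fix \<rho> assume "is_partition \<rho>" "part_weight \<psi> \<rho> \<le> q"
    then show "T n (v \<rho>) \<in> filtration \<psi> (q - \<psi> (nat (n - 2)))"
      using T_bound[of \<rho> n] Cons.prems(1) by (auto elim!: filtration_mono[rotated])
  qed
  then show ?case
    using Cons.IH[of "T n x" "q - \<psi> (nat (n - 2))"] Cons.prems by (simp add: algebra_simps)
qed simp

section \<open>The triangular pairing\<close>

abbreviation \<xi> :: "'v \<Rightarrow> complex" where
  "\<xi> \<equiv> xi sm L J"

lemma xi_hom: "module_hom sm (*) \<xi>"
  unfolding xi_def module_hom_iff_linear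
  using linear_representation[OF independent_v span_v] by simp

lemma xi_v: "is_partition \<rho> \<Longrightarrow> \<xi> (v \<rho>) = (if \<rho> = [] then 1 else 0)"
proof -
  assume \<rho>: "is_partition \<rho>"
  then have "\<xi> (v \<rho>) = (if J = v \<rho> then 1 else 0)"
    unfolding xi_def using representation_basis[OF independent_v, of "v \<rho>"] by simp
  moreover have "J = v \<rho> \<longleftrightarrow> \<rho> = []"
    using inj_onD[OF inj_on_v, of "[]" \<rho>] \<rho> by auto
  ultimately show ?thesis by simp
qed

lemma xi_vspan_eq_0: "x \<in> vspan P \<Longrightarrow> \<not> P [] \<Longrightarrow> \<xi> x = 0"
  unfolding vspan_def
proof (induction x rule: span_induct_alt)
  case (step a x y)
  then obtain \<rho> where "x = v \<rho>" "is_partition \<rho>" "\<rho> \<noteq> []" by auto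
  then show ?case
    using step xi_v module_hom.add[OF xi_hom] module_hom.scale[OF xi_hom] by auto
qed (simp add: module_hom.zero[OF xi_hom])

text \<open>Up to the factor \<open>diag_coeff \<Lambda>4 \<mu>\<close> and vectors of larger size, \<open>pairing \<mu>\<close> is the
  coordinate functional of \<open>v\<^sub>\<mu>\<close> (\<open>pairing_v\<close> below).\<close>
definition pairing :: "nat list \<Rightarrow> 'v \<Rightarrow> complex" where
  "pairing \<mu> x = \<xi> (T_word (ann_word \<mu>) x)"

lemma pairing_hom: "module_hom sm (*) (pairing \<mu>)"
proof -
  have "pairing \<mu> = \<xi> \<circ> T_word (ann_word \<mu>)" by (simp add: fun_eq_iff pairing_def)
  with module_hom_compose[OF T_word_hom xi_hom] show ?thesis by (simp only:)
qed

lemmas pairing_add = module_hom.add[OF pairing_hom]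
  and pairing_diff = module_hom.diff[OF pairing_hom]
  and pairing_scale = module_hom.scale[OF pairing_hom]
  and pairing_sum = module_hom.sum[OF pairing_hom]

lemma pairing_Cons: "pairing (m # \<mu>) x = pairing \<mu> (T (int m + 2) x)"
  by (simp add: pairing_def)

lemma pairing_filtration_eq_0:
  assumes T_bound: "\<And>\<kappa> n. is_partition \<kappa> \<Longrightarrow> 3 \<le> n \<Longrightarrow>
      T n (v \<kappa>) \<in> filtration \<psi> (part_weight \<psi> \<kappa> - \<psi> (nat (n - 2)))"
    and "is_partition \<mu>" "x \<in> filtration \<psi> q" "q < part_weight \<psi> \<mu>"
  shows "pairing \<mu> x = 0"
proof -
  have "sum_list (map (\<lambda>n. \<psi> (nat (n - 2))) (ann_word \<mu>)) = part_weight \<psi> \<mu>"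
    by (induction \<mu>) auto
  moreover have "ann_word \<mu> \<in> lists {3..}"
    using assms(2) by (auto simp: ann_word_in_lists is_partition_def)
  ultimately show ?thesis
    using T_word_filtration[OF T_bound, of "ann_word \<mu>" x q] assms(3,4)
    by (auto simp: pairing_def intro: xi_vspan_eq_0)
qed

lemma size_bounds:
  "is_partition \<kappa> \<Longrightarrow>
    (\<forall>x\<ge>3. T x (v \<kappa>) \<in> filtration int (int (sum_list \<kappa>) - int (nat (x - 2)))) \<and>
    (\<forall>x\<ge>2. L x (v \<kappa>) \<in> filtration int (int (sum_list \<kappa>) + (if x \<le> 4 then 0 else 2 - x)))"
  using annihilator_filtration[of int "\<lambda>x. if x \<le> 4 then 0 else 2 - x"]
  by (simp add: bracket_bounded_def)

lemma T_size:
  assumes "is_partition \<kappa>" "3 \<le> x"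
  shows "T x (v \<kappa>) \<in> filtration int (int (sum_list \<kappa>) + 2 - x)"
proof -
  have "int (sum_list \<kappa>) - int (nat (x - 2)) = int (sum_list \<kappa>) + 2 - x" using assms(2) by simp
  then show ?thesis using size_bounds assms by metis
qed

lemma L_size:
  assumes "is_partition \<kappa>"
  shows "L b (v \<kappa>) \<in> filtration int (int (sum_list \<kappa>) + (if b \<le> 1 then 2 - b else if b \<le> 4 then 0 else 2 - b))"
proof (cases "b \<le> 1")
  case True
  then have "L (2 - int (nat (2 - b))) (v \<kappa>) \<in> filtration int (int (sum_list \<kappa>) + int (nat (2 - b)))"
    using assms by (intro L_creation_filtration v_in_vspan) auto
  then show ?thesis using True by simp
qed (use size_bounds[OF assms] in auto)

lemma pairing_size_eq_0:
  assumes "is_partition \<mu>" "x \<in> filtration int q" "q < int (sum_list \<mu>)"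
  shows "pairing \<mu> x = 0"
proof (rule pairing_filtration_eq_0[of int])
  show "T n (v \<kappa>) \<in> filtration int (part_weight int \<kappa> - int (nat (n - 2)))"
    if "is_partition \<kappa>" "3 \<le> n" for \<kappa> n
  proof -
    have "part_weight int \<kappa> - int (nat (n - 2)) = int (sum_list \<kappa>) + 2 - n" using that(2) by simp
    then show ?thesis using T_size[OF that] by (simp only:)
  qed
qed (use assms in simp_all)

lemma pairing_nonzero_size_le:
  "is_partition \<mu> \<Longrightarrow> is_partition \<nu> \<Longrightarrow> pairing \<mu> (v \<nu>) \<noteq> 0 \<Longrightarrow> sum_list \<mu> \<le> sum_list \<nu>"
  using pairing_size_eq_0[of \<mu> "v \<nu>" "int (sum_list \<nu>)"] v_in_vspan[of \<nu>] by force

lemma pairing_nonzero_deg_le: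
  assumes \<delta>: "\<delta> = 1 \<or> (\<delta> = 2 \<and> \<Lambda>3 = 0)"
    and "is_partition \<mu>" "is_partition \<nu>" "pairing \<mu> (v \<nu>) \<noteq> 0"
  shows "deg_delta \<delta> \<mu> \<le> deg_delta \<delta> \<nu>"
proof -
  define \<psi> where "\<psi> = (\<lambda>p. int (deg_part \<delta> p))"
  \<comment> \<open>\<open>\<phi> 3 = -1\<close> for \<open>\<delta> = 2\<close> is where \<open>L\<^sub>3 J = 0\<close>, i.e. \<open>\<Lambda>\<^sub>3 = 0\<close>, is needed\<close>
  define \<phi> where "\<phi> = (\<lambda>n. if n = 3 then 1 - int \<delta> else if n \<le> 4 then 0 else 4 - n)"
  have \<delta>12: "\<delta> = 1 \<or> \<delta> = 2" using \<delta> by blast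
  have T_bound: "is_partition \<kappa> \<Longrightarrow> 3 \<le> n \<Longrightarrow>
      T n (v \<kappa>) \<in> filtration \<psi> (part_weight \<psi> \<kappa> - \<psi> (nat (n - 2)))" for \<kappa> n
  proof (rule annihilator_filtration[THEN conjunct1, rule_format])
    show "\<psi> (p + q - 2) \<le> \<psi> p + \<psi> q" if "1 \<le> p" "p < q" for p q
      using that \<delta>12 by (auto simp: \<psi>_def deg_part_def)
    show "bracket_bounded \<psi> \<phi> x (- \<psi> (nat (x - 2)))" if "3 \<le> x" for x
      by (insert \<delta>12 that, unfold \<psi>_def \<phi>_def)
        (elim disjE; simp only:; auto simp: bracket_bounded_def deg_part_def)
    show "bracket_bounded \<psi> \<phi> x (\<phi> x)" if "2 \<le> x" for x
      by (insert \<delta>12 that, unfold \<psi>_def \<phi>_def)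
        (elim disjE; simp only:; auto simp: bracket_bounded_def deg_part_def)
    show "0 \<le> \<phi> n" if "2 \<le> n" "n \<le> 4" "L n J \<noteq> 0" for n
      using that \<delta> L_J(2) by (auto simp: \<phi>_def)
  qed
  have "pairing \<mu> (v \<nu>) = 0" if "part_weight \<psi> \<nu> < part_weight \<psi> \<mu>"
  proof (rule pairing_filtration_eq_0[of \<psi>])
    show "v \<nu> \<in> filtration \<psi> (part_weight \<psi> \<nu>)" by (rule v_in_vspan[OF assms(3)]) simp
  qed (use T_bound assms(2) that in auto)
  then have "\<not> part_weight \<psi> \<nu> < part_weight \<psi> \<mu>" using assms(4) by blast
  then show ?thesis by (simp add: \<psi>_def)
qed

lemma vir_bracket_size:
  assumes "1 \<le> m" "1 \<le> p" "p \<noteq> m" "is_partition \<kappa>"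
  shows "vir_bracket (int m + 2) (2 - int p) (v \<kappa>)
    \<in> filtration int (int (sum_list \<kappa>) + int p - int m - 1)"
proof -
  let ?b = "int m + 2 + (2 - int p)"
  have "int (sum_list \<kappa>) + (if ?b \<le> 1 then 2 - ?b else if ?b \<le> 4 then 0 else 2 - ?b)
      \<le> int (sum_list \<kappa>) + int p - int m - 1"
    using assms(1-3) by auto
  from filtration_mono[OF this L_size[OF assms(4)]]
  have "L ?b (v \<kappa>) \<in> filtration int (int (sum_list \<kappa>) + int p - int m - 1)" .
  moreover have "v \<kappa> \<in> filtration int (int (sum_list \<kappa>) + int p - int m - 1)" if "?b = 0"
    using that assms(4) by (auto intro: v_in_vspan)
  ultimately show ?thesis
    unfolding vir_bracket_def by (intro vspan_add vspan_scale) (auto intro!: vspan_scale)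
qed

lemma vir_bracket_diagonal:
  "vir_bracket (int m + 2) (2 - int m) y = sm (of_nat (2 * m)) (sm \<Lambda>4 y + T 4 y)"
  using L_eq_T[of 4 y] by (simp add: vir_bracket_def Lambda_at_def)

text \<open>The leading term comes from \<open>[L\<^sub>m\<^sub>+\<^sub>2, L\<^sub>2\<^sub>-\<^sub>m] = 2m L\<^sub>4\<close> with \<open>L\<^sub>4 \<approx> \<Lambda>\<^sub>4\<close>;
  every other commutator term lowers the size further.\<close>
lemma T_leading_term:
  assumes m: "1 \<le> m"
  shows "is_partition \<kappa> \<Longrightarrow> T (int m + 2) (v \<kappa>)
      - sm (of_nat (2 * m) * \<Lambda>4 * of_nat (count_list \<kappa> m)) (v (remove1 m \<kappa>))
    \<in> filtration int (int (sum_list \<kappa>) - int m - 1)"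
proof (induction \<kappa>)
  case Nil
  show ?case using m T_J[of "int m + 2"] by simp
next
  case (Cons p \<kappa>)
  have \<kappa>: "is_partition \<kappa>" and p: "1 \<le> p" using Cons.prems by (auto simp: is_partition_Cons)
  let ?F = "filtration int (int (sum_list \<kappa>) - int m - 1 + int p)"
  define C where "C = of_nat (2 * m) * \<Lambda>4 * of_nat (count_list \<kappa> m)"
  define R where "R = T (int m + 2) (v \<kappa>) - sm C (v (remove1 m \<kappa>))"
  have R: "R \<in> filtration int (int (sum_list \<kappa>) - int m - 1)"
    using Cons.IH[OF \<kappa>] by (simp add: R_def C_def)
  have LR: "L (2 - int p) R \<in> ?F"
    by (rule L_creation_filtration[OF _ p R]) simp
  have decomp: "T (int m + 2) (v (p # \<kappa>))
      = L (2 - int p) R + sm C (v (p # remove1 m \<kappa>)) + vir_bracket (int m + 2) (2 - int p) (v \<kappa>)"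
    using T_commutator_L[of "int m + 2" "2 - int p" "v \<kappa>"]
    by (simp add: R_def module_hom.diff[OF L_hom] module_hom.scale[OF L_hom])
  have "int (sum_list \<kappa>) - int m - 1 + int p = int (sum_list (p # \<kappa>)) - int m - 1" by simp
  moreover have "T (int m + 2) (v (p # \<kappa>))
      - sm (of_nat (2 * m) * \<Lambda>4 * of_nat (count_list (p # \<kappa>) m)) (v (remove1 m (p # \<kappa>))) \<in> ?F"
  proof (cases "p = m")
    case True
    have "sm C (v (p # remove1 m \<kappa>)) = sm C (v \<kappa>)"
      using True Cons_remove1_partition[of m \<kappa>] Cons.prems by (cases "m \<in> set \<kappa>") (auto simp: C_def)
    then have "T (int m + 2) (v (p # \<kappa>))
        = L (2 - int p) R + sm C (v \<kappa>) + sm (of_nat (2 * m)) (sm \<Lambda>4 (v \<kappa>) + T 4 (v \<kappa>))"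
      using decomp vir_bracket_diagonal[of m "v \<kappa>"] True by simp
    moreover have "T 4 (v \<kappa>) \<in> ?F"
      by (rule filtration_mono[OF _ T_size[OF \<kappa>]]) (use True in simp_all)
    ultimately show ?thesis
      using True LR
      by (auto simp: C_def scale_right_distrib scale_left_distrib algebra_simps
          intro!: vspan_add vspan_scale)
  next
    case False
    then show ?thesis
      using LR vir_bracket_size[OF m p False \<kappa>] unfolding decomp
      by (auto simp: C_def algebra_simps intro!: vspan_add)
  qed
  ultimately show ?case by (simp only:)
qed

lemma pairing_v_mset:
  "is_partition \<mu> \<Longrightarrow> is_partition \<nu> \<Longrightarrow> sum_list \<nu> \<le> sum_list \<mu> \<Longrightarrow>
    pairing \<mu> (v \<nu>) = (if mset \<mu> = mset \<nu> then diag_coeff \<Lambda>4 \<mu> else 0)"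
proof (induction \<mu> arbitrary: \<nu>)
  case Nil
  then show ?case by (simp add: pairing_def partition_sum_eq_0 xi_v)
next
  case (Cons m \<mu>)
  have \<mu>: "is_partition \<mu>" and m: "1 \<le> m" using Cons.prems by (auto simp: is_partition_Cons)
  define C where "C = of_nat (2 * m) * \<Lambda>4 * of_nat (count_list \<nu> m)"
  define R where "R = T (int m + 2) (v \<nu>) - sm C (v (remove1 m \<nu>))"
  have "R \<in> filtration int (int (sum_list \<nu>) - int m - 1)"
    unfolding R_def C_def using T_leading_term[OF m Cons.prems(2)] .
  moreover have "int (sum_list \<nu>) - int m - 1 < int (sum_list \<mu>)" using Cons.prems(3) by simp
  ultimately have "pairing \<mu> R = 0" by (rule pairing_size_eq_0[OF \<mu>])
  then have reduce: "pairing (m # \<mu>) (v \<nu>) = C * pairing \<mu> (v (remove1 m \<nu>))"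
    by (simp add: pairing_Cons R_def pairing_diff pairing_scale)
  show ?case
  proof (cases "m \<in> set \<nu>")
    case False
    then have "mset (m # \<mu>) \<noteq> mset \<nu>" by (metis list.set_intros(1) set_mset_mset)
    then show ?thesis using False by (simp add: reduce C_def)
  next
    case True
    have "is_partition (remove1 m \<nu>)" "sum_list (remove1 m \<nu>) \<le> sum_list \<mu>"
      using Cons.prems True is_partition_remove1 sum_list_map_remove1[of m \<nu> id] by auto
    note IH = Cons.IH[OF \<mu> this]
    have "mset (m # \<mu>) = mset \<nu> \<longleftrightarrow> mset \<mu> = mset (remove1 m \<nu>)"
    proof
      assume "mset (m # \<mu>) = mset \<nu>"
      then show "mset \<mu> = mset (remove1 m \<nu>)" by (metis add_mset_remove_trivial mset.simps(2) mset_remove1)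
    qed (use True in simp)
    moreover have "count_list \<nu> m = count_list (m # \<mu>) m" if "mset (m # \<mu>) = mset \<nu>"
      using that by (metis count_mset)
    ultimately show ?thesis by (auto simp: reduce IH C_def)
  qed
qed

lemma pairing_v:
  assumes "is_partition \<mu>" "is_partition \<nu>" "sum_list \<nu> \<le> sum_list \<mu>"
  shows "pairing \<mu> (v \<nu>) = (if \<mu> = \<nu> then diag_coeff \<Lambda>4 \<mu> else 0)"
  using pairing_v_mset[OF assms] partition_eq_iff_mset[OF assms(1,2)] by simp

lemma T_word_Witt_relation:
  assumes "u @ m # n # z \<in> lists {3..}"
  shows "\<xi> (T_word (u @ m # n # z) x) - \<xi> (T_word (u @ n # m # z) x)
           = of_int (n - m) * \<xi> (T_word (u @ (n + m) # z) x)"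
proof -
  have comm: "T n (T m (T_word u x)) - T m (T n (T_word u x))
      = sm (of_int (n - m)) (T (n + m) (T_word u x))"
    using assms by (intro T_commutator) auto
  have "\<xi> (T_word (u @ m # n # z) x) - \<xi> (T_word (u @ n # m # z) x)
      = \<xi> (T_word z (T n (T m (T_word u x)) - T m (T n (T_word u x))))"
    by (simp add: T_word_append module_hom.diff[OF T_word_hom] module_hom.diff[OF xi_hom])
  also have "\<dots> = of_int (n - m) * \<xi> (T_word (u @ (n + m) # z) x)"
    unfolding comm by (simp add: T_word_append module_hom.scale[OF T_word_hom] module_hom.scale[OF xi_hom])
  finally show ?thesis .
qed

definition admissible :: "nat \<Rightarrow> nat list set" where
  "admissible k = {\<nu>. is_partition \<nu> \<and> sum_list \<nu> \<le> 3 * k \<and> deg_delta 1 \<nu> \<le> k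
                        \<and> (\<Lambda>3 = 0 \<longrightarrow> deg_delta 2 \<nu> \<le> k)}"

lemma admissible_subset: "admissible k \<subseteq> Collect is_partition"
  by (auto simp: admissible_def)

lemma replicate_3_admissible: "replicate k 3 \<in> admissible k"
proof -
  have "deg_delta \<delta> (replicate k 3) = k" for \<delta>
    by (induction k) (auto simp: deg_delta_def deg_part_def)
  then show ?thesis by (simp add: admissible_def is_partition_replicate sum_list_replicate)
qed

lemma admissible_downward_closed:
  assumes "\<nu> \<in> admissible k" "is_partition \<mu>" "pairing \<mu> (v \<nu>) \<noteq> 0"
  shows "\<mu> \<in> admissible k"
  using assms pairing_nonzero_size_le[OF assms(2) _ assms(3)]
    pairing_nonzero_deg_le[OF _ assms(2) _ assms(3)]
  by (fastforce simp: admissible_def)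

lemma pairing_outside_admissible:
  assumes "x \<in> vspan (\<lambda>\<nu>. \<nu> \<in> admissible k)" "is_partition \<mu>" "\<mu> \<notin> admissible k"
  shows "pairing \<mu> x = 0"
  using assms(1) unfolding vspan_def
proof (induction x rule: span_induct_alt)
  case (step a x y)
  then obtain \<nu> where "x = v \<nu>" "\<nu> \<in> admissible k" by auto
  then have "pairing \<mu> x = 0" using admissible_downward_closed assms(2,3) by blast
  then show ?case using step by (simp add: pairing_add pairing_scale)
qed (simp add: module_hom.zero[OF pairing_hom])

lemma vspan_admissible_subset_V_space:
  assumes "\<delta> = 1 \<or> (\<delta> = 2 \<and> \<Lambda>3 = 0)"
  shows "vspan (\<lambda>\<nu>. \<nu> \<in> admissible k) \<subseteq> V_space sm L J \<delta> k"
proof -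
  have "v \<nu> \<in> U_space sm L J (3 * k)" if "\<nu> \<in> admissible k" for \<nu>
    unfolding U_space_def by (rule span_base) (use that in \<open>auto simp: admissible_def\<close>)
  then show ?thesis
    unfolding vspan_def V_space_def using assms by (intro span_mono) (auto simp: admissible_def)
qed

lemma V_space_2_subset_1: "V_space sm L J 2 k \<subseteq> V_space sm L J 1 k"
proof -
  have "deg_delta 1 \<nu> \<le> deg_delta 2 \<nu>" for \<nu>
    unfolding deg_delta_def by (induction \<nu>) (auto simp: deg_part_def)
  then show ?thesis unfolding V_space_def by (intro span_mono) (auto intro: le_trans)
qed

end

section \<open>Construction and uniqueness of \<open>\<Psi>\<close>\<close>

locale whittaker2_nondeg = whittaker2 +
  assumes Lambda4_nonzero: "\<Lambda>4 \<noteq> 0"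
begin

lemma diag_coeff_Lambda4_nonzero: "is_partition \<mu> \<Longrightarrow> diag_coeff \<Lambda>4 \<mu> \<noteq> 0"
  using diag_coeff_nonzero Lambda4_nonzero by blast

text \<open>Pairing against a partition of maximal size isolates its coefficient.\<close>
lemma pairing_combination_eq_0:
  assumes "finite A"
  shows "A \<subseteq> Collect is_partition \<Longrightarrow>
    (\<And>\<mu>. is_partition \<mu> \<Longrightarrow> pairing \<mu> (\<Sum>\<nu>\<in>A. sm (r \<nu>) (v \<nu>)) = 0) \<Longrightarrow> \<forall>\<nu>\<in>A. r \<nu> = 0"
  using assms
proof (induction A rule: finite_ranking_induct[where f = sum_list])
  case (insert \<mu> A)
  have \<mu>: "is_partition \<mu>" using insert.prems by simp
  have "pairing \<mu> (sm (r \<nu>) (v \<nu>)) = (if \<nu> = \<mu> then r \<mu> * diag_coeff \<Lambda>4 \<mu> else 0)"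
    if "\<nu> \<in> insert \<mu> A" for \<nu>
    using that insert.prems insert.hyps pairing_v[OF \<mu>, of \<nu>] by (auto simp: pairing_scale)
  then have "pairing \<mu> (\<Sum>\<nu>\<in>insert \<mu> A. sm (r \<nu>) (v \<nu>)) = r \<mu> * diag_coeff \<Lambda>4 \<mu>"
    using insert.hyps(1) by (simp add: pairing_sum)
  then have "r \<mu> = 0" using insert.prems(2)[OF \<mu>] diag_coeff_Lambda4_nonzero[OF \<mu>] by simp
  moreover have "\<forall>\<nu>\<in>A. r \<nu> = 0"
  proof (cases "\<mu> \<in> A")
    case False
    then show ?thesis using insert \<open>r \<mu> = 0\<close> by simp
  qed (use insert in \<open>simp add: insert_absorb\<close>)
  ultimately show ?case by simp
qed simp

lemma pairing_nondegenerate: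
  assumes "\<And>\<mu>. is_partition \<mu> \<Longrightarrow> pairing \<mu> x = 0"
  shows "x = 0"
proof -
  have "x \<in> span (v ` Collect is_partition)" using span_v by simp
  then obtain t r where t: "finite t" "t \<subseteq> v ` Collect is_partition" "x = (\<Sum>a\<in>t. sm (r a) a)"
    unfolding span_explicit by blast
  define A where "A = {\<nu>. is_partition \<nu> \<and> v \<nu> \<in> t}"
  have A: "A \<subseteq> Collect is_partition" by (auto simp: A_def)
  have tA: "t = v ` A" using t(2) by (auto simp: A_def)
  have inj: "inj_on v A" using inj_on_v A by (rule inj_on_subset)
  have "finite A" using t(1) tA inj finite_imageD by blast
  have x: "x = (\<Sum>\<nu>\<in>A. sm (r (v \<nu>)) (v \<nu>))"
    unfolding t(3) tA by (simp add: sum.reindex[OF inj])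
  have "pairing \<mu> (\<Sum>\<nu>\<in>A. sm (r (v \<nu>)) (v \<nu>)) = 0" if "is_partition \<mu>" for \<mu>
    using assms[OF that] unfolding x .
  then have "\<forall>\<nu>\<in>A. r (v \<nu>) = 0"
    by (rule pairing_combination_eq_0[OF \<open>finite A\<close> A, where r = "\<lambda>\<nu>. r (v \<nu>)"])
  then show ?thesis unfolding x by simp
qed

lemma eq_if_T_words_agree:
  assumes "\<And>w. w \<in> lists {3..} \<Longrightarrow> \<xi> (T_word w x) = \<xi> (T_word w y)"
  shows "x = y"
proof -
  have "pairing \<mu> (x - y) = 0" if "is_partition \<mu>" for \<mu>
    using assms[of "ann_word \<mu>"] that
    by (auto simp: pairing_def ann_word_in_lists is_partition_def module_hom.diff[OF T_word_hom]
        module_hom.diff[OF xi_hom])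
  then have "x - y = 0" by (rule pairing_nondegenerate)
  then show ?thesis by simp
qed

text \<open>Back substitution in the triangular system given by \<open>pairing_v\<close>.\<close>
lemma pairing_solvable:
  assumes "S \<subseteq> Collect is_partition"
  shows "\<exists>x \<in> vspan (\<lambda>\<rho>. \<rho> \<in> S \<and> sum_list \<rho> < m).
           \<forall>\<mu>\<in>S. sum_list \<mu> < m \<longrightarrow> pairing \<mu> x = t \<mu>"
proof (induction m arbitrary: t)
  case 0
  show ?case by (intro bexI[of _ 0]) auto
next
  case (Suc m)
  define N where "N = {\<rho>\<in>S. sum_list \<rho> = m}"
  have "finite N"
    by (rule finite_subset[OF _ finite_partitions_sum_le[of m]]) (use assms in \<open>auto simp: N_def\<close>)
  define y where "y = (\<Sum>\<nu>\<in>N. sm (t \<nu> / diag_coeff \<Lambda>4 \<nu>) (v \<nu>))"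
  have y: "y \<in> vspan (\<lambda>\<rho>. \<rho> \<in> S \<and> sum_list \<rho> < Suc m)"
    unfolding y_def vspan_def using assms by (intro span_sum span_scale span_base) (auto simp: N_def)
  have y_top: "pairing \<mu> y = t \<mu>" if "\<mu> \<in> N" for \<mu>
  proof -
    have "pairing \<mu> (sm (t \<nu> / diag_coeff \<Lambda>4 \<nu>) (v \<nu>)) = (if \<nu> = \<mu> then t \<mu> else 0)"
      if "\<nu> \<in> N" for \<nu>
    proof -
      have "is_partition \<mu>" "is_partition \<nu>" "sum_list \<nu> \<le> sum_list \<mu>"
        using that \<open>\<mu> \<in> N\<close> assms by (auto simp: N_def)
      then show ?thesis
        using pairing_v[of \<mu> \<nu>] diag_coeff_Lambda4_nonzero[of \<mu>] by (auto simp: pairing_scale)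
    qed
    then show ?thesis using \<open>\<mu> \<in> N\<close> \<open>finite N\<close> by (simp add: y_def pairing_sum)
  qed
  obtain z where z: "z \<in> vspan (\<lambda>\<rho>. \<rho> \<in> S \<and> sum_list \<rho> < m)"
    and z_low: "\<forall>\<mu>\<in>S. sum_list \<mu> < m \<longrightarrow> pairing \<mu> z = t \<mu> - pairing \<mu> y"
    using Suc.IH[of "\<lambda>\<mu>. t \<mu> - pairing \<mu> y"] by (elim bexE)
  have z_top: "pairing \<mu> z = 0" if "\<mu> \<in> N" for \<mu>
  proof (rule pairing_size_eq_0)
    show "z \<in> filtration int (int m - 1)"
      using z by (rule subsetD[OF vspan_mono, rotated]) auto
  qed (use that assms in \<open>auto simp: N_def\<close>)
  have "y + z \<in> vspan (\<lambda>\<rho>. \<rho> \<in> S \<and> sum_list \<rho> < Suc m)"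
    using y z by (auto intro: vspan_add elim!: subsetD[OF vspan_mono, rotated])
  moreover have "pairing \<mu> (y + z) = t \<mu>" if "\<mu> \<in> S" "sum_list \<mu> < Suc m" for \<mu>
    using that z_low y_top[of \<mu>] z_top[of \<mu>] by (cases "sum_list \<mu> = m") (auto simp: N_def pairing_add)
  ultimately show ?case by blast
qed

lemma Psi_component_exists:
  "\<exists>x \<in> vspan (\<lambda>\<nu>. \<nu> \<in> admissible k).
     \<forall>\<mu>. is_partition \<mu> \<longrightarrow> pairing \<mu> x = (if \<mu> = replicate k 3 then 1 else 0)"
proof -
  obtain x where x: "x \<in> vspan (\<lambda>\<rho>. \<rho> \<in> admissible k \<and> sum_list \<rho> < 3 * k + 1)"
    and val: "\<forall>\<mu>\<in>admissible k. sum_list \<mu> < 3 * k + 1 \<longrightarrow>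
                pairing \<mu> x = (if \<mu> = replicate k 3 then 1 else 0)"
    using pairing_solvable[OF admissible_subset[of k],
        where m = "3 * k + 1" and t = "\<lambda>\<mu>. if \<mu> = replicate k 3 then 1 else 0"]
    by (elim bexE)
  have x': "x \<in> vspan (\<lambda>\<nu>. \<nu> \<in> admissible k)"
    using x by (rule subsetD[OF vspan_mono, rotated]) auto
  have "pairing \<mu> x = (if \<mu> = replicate k 3 then 1 else 0)" if "is_partition \<mu>" for \<mu>
  proof (cases "\<mu> \<in> admissible k")
    case False
    then show ?thesis using pairing_outside_admissible[OF x' that] replicate_3_admissible by auto
  qed (use val in \<open>auto simp: admissible_def\<close>)
  then show ?thesis using x' by blast
qed

lemma T_word_values_from_pairing:
  assumes "\<And>\<mu>. is_partition \<mu> \<Longrightarrow> pairing \<mu> x = (if \<mu> = replicate k 3 then 1 else 0)"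
    and "w \<in> lists {3..}"
  shows "\<xi> (T_word w x) = Psi_target k w"
proof -
  have "\<xi> (T_word w x) - Psi_target k w = 0"
  proof (rule Witt_relation_vanishing[of "{3..}"])
    fix u m n z assume "u @ m # n # z \<in> lists {3 :: int..}"
    then show "\<xi> (T_word (u @ m # n # z) x) - Psi_target k (u @ m # n # z)
        - (\<xi> (T_word (u @ n # m # z) x) - Psi_target k (u @ n # m # z))
      = of_int (n - m) * (\<xi> (T_word (u @ (n + m) # z) x) - Psi_target k (u @ (n + m) # z))"
      using T_word_Witt_relation[of u m n z x] Psi_target_Witt_relation[of u m n z k]
      by (simp add: algebra_simps)
  next
    fix w assume "w \<in> lists {3 :: int..}" "sorted_wrt (\<ge>) w"
    then obtain \<mu> where "is_partition \<mu>" "ann_word \<mu> = w" by (rule sorted_word_eq_ann_word)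
    then show "\<xi> (T_word w x) - Psi_target k w = 0"
      using assms(1)[of \<mu>] ann_word_eq_iff[of \<mu> "replicate k 3"]
      by (auto simp: pairing_def Psi_target_def ann_word_replicate)
  qed (use assms(2) in auto)
  then show ?thesis by simp
qed

lemma psi_conditions_imp_T_word_values:
  assumes C: "psi_conditions sm L J \<Lambda>3 \<Lambda>4 \<Psi>"
  shows "w \<in> lists {3..} \<Longrightarrow> \<xi> (T_word w (\<Psi> k)) = Psi_target k w"
proof (induction w arbitrary: k)
  case Nil
  then show ?case using C by (auto simp: psi_conditions_def Psi_target_def)
next
  case (Cons n w)
  have "T n (\<Psi> k) = (if n = 5 then (case k of 0 \<Rightarrow> 0 | Suc k' \<Rightarrow> \<Psi> k') else 0)"
  proof -
    have "n = 3 \<or> n = 4 \<or> n = 5 \<or> 5 < n" using Cons.prems by auto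
    then show ?thesis
      using C by (cases k) (auto simp: psi_conditions_def T_def Lambda_at_def)
  qed
  then show ?case
    using Cons by (cases k) (auto simp: Psi_target_Cons module_hom.zero[OF T_word_hom]
        module_hom.zero[OF xi_hom])
qed

lemma T_word_values_imp_psi_conditions:
  assumes val: "\<And>k w. w \<in> lists {3..} \<Longrightarrow> \<xi> (T_word w (\<Psi> k)) = Psi_target k w"
  shows "psi_conditions sm L J \<Lambda>3 \<Lambda>4 \<Psi>"
proof -
  have zero: "\<xi> (T_word w 0) = 0" for w
    by (simp add: module_hom.zero[OF T_word_hom] module_hom.zero[OF xi_hom])
  have T_val: "T n (\<Psi> k) = (if n = 5 then (case k of 0 \<Rightarrow> 0 | Suc k' \<Rightarrow> \<Psi> k') else 0)"
    if "3 \<le> n" for n k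
  proof (rule eq_if_T_words_agree)
    fix w :: "int list" assume w: "w \<in> lists {3..}"
    have "\<xi> (T_word w (T n (\<Psi> k))) = Psi_target k (n # w)" using val[of "n # w" k] w that by simp
    then show "\<xi> (T_word w (T n (\<Psi> k)))
        = \<xi> (T_word w (if n = 5 then (case k of 0 \<Rightarrow> 0 | Suc k' \<Rightarrow> \<Psi> k') else 0))"
      using val[of w] w zero by (cases k) (auto simp: Psi_target_Cons)
  qed
  have "\<Psi> 0 = J"
  proof (rule eq_if_T_words_agree)
    fix w :: "int list" assume w: "w \<in> lists {3..}"
    then show "\<xi> (T_word w (\<Psi> 0)) = \<xi> (T_word w J)"
      using val[of w 0] zero xi_v[of "[]"] T_J by (cases w) (auto simp: Psi_target_def)
  qed
  moreover have "\<xi> (\<Psi> k) = (if k = 0 then 1 else 0)" for k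
    using val[of "[]" k] by (simp add: Psi_target_def)
  moreover have "L n (\<Psi> k) = sm (Lambda_at n) (\<Psi> k)
      + (if n = 5 then (case k of 0 \<Rightarrow> 0 | Suc k' \<Rightarrow> \<Psi> k') else 0)" if "3 \<le> n" for n k
    using T_val[OF that] L_eq_T by simp
  ultimately show ?thesis by (simp add: psi_conditions_def Lambda_at_def L_J)
qed

lemma psi_conditions_unique:
  assumes "psi_conditions sm L J \<Lambda>3 \<Lambda>4 \<Psi>" "psi_conditions sm L J \<Lambda>3 \<Lambda>4 \<Psi>'"
  shows "\<Psi> = \<Psi>'"
proof
  fix k
  show "\<Psi> k = \<Psi>' k"
    by (rule eq_if_T_words_agree)
      (simp add: psi_conditions_imp_T_word_values[OF assms(1)] psi_conditions_imp_T_word_values[OF assms(2)])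
qed

lemma admissible_solution_exists:
  "\<exists>\<Psi>. psi_conditions sm L J \<Lambda>3 \<Lambda>4 \<Psi> \<and> (\<forall>k. \<Psi> k \<in> vspan (\<lambda>\<nu>. \<nu> \<in> admissible k))"
proof -
  have "\<forall>k. \<exists>x. x \<in> vspan (\<lambda>\<nu>. \<nu> \<in> admissible k) \<and>
      (\<forall>\<mu>. is_partition \<mu> \<longrightarrow> pairing \<mu> x = (if \<mu> = replicate k 3 then 1 else 0))"
    using Psi_component_exists by blast
  from choice[OF this] obtain \<Psi> where
    admissible: "\<And>k. \<Psi> k \<in> vspan (\<lambda>\<nu>. \<nu> \<in> admissible k)" and
    pairing: "\<And>k \<mu>. is_partition \<mu> \<Longrightarrow> pairing \<mu> (\<Psi> k) = (if \<mu> = replicate k 3 then 1 else 0)"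
    by blast
  have "psi_conditions sm L J \<Lambda>3 \<Lambda>4 \<Psi>"
    by (rule T_word_values_imp_psi_conditions, rule T_word_values_from_pairing[OF pairing])
  then show ?thesis using admissible by blast
qed

end

theorem theoremA7:
  fixes smult_v :: "complex \<Rightarrow> 'v::ab_group_add \<Rightarrow> 'v"
    and L :: "int \<Rightarrow> 'v \<Rightarrow> 'v" and J :: 'v
    and c \<Lambda>2 \<Lambda>3 \<Lambda>4 :: complex
  assumes "whittaker_module2 smult_v c L J \<Lambda>2 \<Lambda>3 \<Lambda>4"
    and "\<Lambda>4 \<noteq> 0"
  shows "(\<exists>!\<Psi>. psi_conditions smult_v L J \<Lambda>3 \<Lambda>4 \<Psi>) \<and>
         (\<forall>\<Psi>. psi_conditions smult_v L J \<Lambda>3 \<Lambda>4 \<Psi> \<longrightarrow>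
            (\<forall>k. \<Psi> k \<in> V_space smult_v L J 1 k) \<and>
            (\<Lambda>3 = 0 \<longrightarrow> (\<forall>k. \<Psi> k \<in> V_space smult_v L J 2 k \<and>
                                V_space smult_v L J 2 k \<subseteq> V_space smult_v L J 1 k)))"
proof -
  interpret whittaker2_nondeg smult_v c L J \<Lambda>2 \<Lambda>3 \<Lambda>4
    using assms by unfold_locales
  obtain \<Psi>\<^sub>0 where \<Psi>\<^sub>0: "psi_conditions smult_v L J \<Lambda>3 \<Lambda>4 \<Psi>\<^sub>0"
    and admissible: "\<And>k. \<Psi>\<^sub>0 k \<in> vspan (\<lambda>\<nu>. \<nu> \<in> admissible k)"
    using admissible_solution_exists by blast
  have in_V_space: "\<Psi> k \<in> V_space smult_v L J \<delta> k"
    if "psi_conditions smult_v L J \<Lambda>3 \<Lambda>4 \<Psi>" "\<delta> = 1 \<or> (\<delta> = 2 \<and> \<Lambda>3 = 0)" for \<Psi> k \<delta>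
    using psi_conditions_unique[OF that(1) \<Psi>\<^sub>0] admissible vspan_admissible_subset_V_space[OF that(2)]
    by auto
  show ?thesis
  proof (intro conjI allI impI)
    show "\<exists>!\<Psi>. psi_conditions smult_v L J \<Lambda>3 \<Lambda>4 \<Psi>"
      using \<Psi>\<^sub>0 psi_conditions_unique[OF _ \<Psi>\<^sub>0] by blast
  next
    fix \<Psi> k assume "psi_conditions smult_v L J \<Lambda>3 \<Lambda>4 \<Psi>"
    then show "\<Psi> k \<in> V_space smult_v L J 1 k" by (rule in_V_space) simp
    assume "\<Lambda>3 = 0"
    with \<open>psi_conditions smult_v L J \<Lambda>3 \<Lambda>4 \<Psi>\<close> show "\<Psi> k \<in> V_space smult_v L J 2 k"
      by (intro in_V_space) simp_all
  qed (rule V_space_2_subset_1)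
qed

end
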